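(* Let $\mathcal G=(\mathcal R,c,\mathcal S)$ be a singleton congestion game structure with feasible resource sets $\mathcal R^h$, $h\in\mathcal H$, let $\precsim$ be a weak order on $\mathcal H$ and $\Gamma^{\precsim}$ the associated region, and let $C$ be a cost class of $\precsim$. Then: (a) For every $\mu\in\Gamma^{\precsim}$ and every equilibrium load vector $x$ of $(\mathcal G,\mu)$, the vector $(x_r)_{r\in\mathcal R_C}$ is an equilibrium load vector of the single-commodity singleton game $(\mathcal G_C,\mu_C)$, where $\mu_C:=\sum_{h\in C}\mu^h$. (b) If, for every demand in $\mathbb R_+$, the game $\mathcal G_C$ has a unique equilibrium load vector, then for $\mu\in\Gamma^{\precsim}$ the equilibrium loads $x_r(\mu)$, $r\in\mathcal R_C$, are uniquely determined and can be written as $x_r(\mu)=F_r(\mu_C)$ for nondecreasing functions $F_r:\mathbb R_+\to\mathbb R$; equivalently, the family of maps $\{\mu\mapsto x_r(\mu): r\in\mathcal R_C\}$ is comonotonic on $\Gamma^{\precsim}$.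
   Context: A congestion game structure has a finite set $\mathcal R$ of resources with continuous nondecreasing costs $c_r:\mathbb R_+\to\mathbb R_+$ and a finite set $\mathcal H$ of commodities; it is a singleton congestion game when every feasible strategy of commodity $h$ is a single resource, so its strategy set is identified with a nonempty set $\mathcal R^h\subseteq\mathcal R$. For a demand $\mu\in\mathbb R_+^{\mathcal H}$, a feasible flow assigns $f^h_r\ge0$ to $r\in\mathcal R^h$ with $\sum_{r\in\mathcal R^h}f^h_r=\mu^h$; loads are $x_r=\sum_{h: r\in\mathcal R^h}f^h_r$. A Wardrop equilibrium is a feasible flow such that for each $h$ there is $\lambda^h$ with $c_r(x_r)=\lambda^h$ if $r\in\mathcal R^h$, $f^h_r>0$, and $c_r(x_r)\ge\lambda^h$ for all $r\in\mathcal R^h$; an equilibrium load vector is the load vector of a Wardrop equilibrium. The equilibrium costs $\lambda^h(\mu)$ do not depend on which equilibrium is chosen, so $\mu\mapsto\lambda(\mu)$ is well defined. For a weak order (complete preorder) $\precsim$ on $\mathcal H$, define $\Gamma^{\precsim}=\{\mu\in\mathbb R_+^{\mathcal H}: \lambda^h(\mu)\le\lambda^{h'}(\mu)\iff h\precsim h' \text{ for all } h,h'\in\mathcal H\}$. Write $h\sim h'$ if $h\precsim h'$ and $h'\precsim h$, and $h'\succ h$ if $h\precsim h'$ but not $h'\precsim h$. The equivalence classes of $\sim$ are the cost classes; for a cost class $C$, $h'\succ C$ means $h'\succ h$ for $h\in C$. Set $\mathcal R_C=\big(\bigcup_{h\in C}\mathcal R^h\big)\setminus\big(\bigcup_{h'\succ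 C}\mathcal R^{h'}\big)$. $\mathcal G_C$ denotes the singleton congestion game with resources $\mathcal R_C$ (same costs $c_r$) and a single commodity whose feasible strategies are all singletons $\{r\}$, $r\in\mathcal R_C$. A family of functions $\{\psi_i:\Omega\to\mathbb R\}_{i\in A}$ is comonotonic if $(\psi_i(\omega_1)-\psi_i(\omega_2))(\psi_j(\omega_1)-\psi_j(\omega_2))\ge0$ for all $i,j\in A$ and $\omega_1,\omega_2\in\Omega$. *)

theory Defs
  imports "HOL-Analysis.Analysis"
begin

definition singleton_game ::
  "'r set \<Rightarrow> ('r \<Rightarrow> real \<Rightarrow> real) \<Rightarrow> 'h set \<Rightarrow> ('h \<Rightarrow> 'r set) \<Rightarrow> bool" where
  "singleton_game Res c Com S \<longleftrightarrow>
     finite Res \<and> finite Com \<and>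
     (\<forall>r\<in>Res. continuous_on {0..} (c r) \<and> mono_on {0..} (c r) \<and> (\<forall>t\<ge>0. c r t \<ge> 0)) \<and>
     (\<forall>h\<in>Com. S h \<noteq> {} \<and> S h \<subseteq> Res)"

text \<open>A flow f assigns f h r to commodity h and resource r (only r in S h matters).\<close>

definition feasible_flow ::
  "'h set \<Rightarrow> ('h \<Rightarrow> 'r set) \<Rightarrow> ('h \<Rightarrow> real) \<Rightarrow> ('h \<Rightarrow> 'r \<Rightarrow> real) \<Rightarrow> bool" where
  "feasible_flow Com S \<mu> f \<longleftrightarrow>
     (\<forall>h\<in>Com. (\<forall>r\<in>S h. f h r \<ge> 0) \<and> (\<Sum>r\<in>S h. f h r) = \<mu> h)"

definition load :: "'h set \<Rightarrow> ('h \<Rightarrow> 'r set) \<Rightarrow> ('h \<Rightarrow> 'r \<Rightarrow> real) \<Rightarrow> 'r \<Rightarrow> real" where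
  "load Com S f r = (\<Sum>h\<in>{h\<in>Com. r \<in> S h}. f h r)"

definition wardrop_eq ::
  "('r \<Rightarrow> real \<Rightarrow> real) \<Rightarrow> 'h set \<Rightarrow> ('h \<Rightarrow> 'r set) \<Rightarrow> ('h \<Rightarrow> real)
     \<Rightarrow> ('h \<Rightarrow> 'r \<Rightarrow> real) \<Rightarrow> bool" where
  "wardrop_eq c Com S \<mu> f \<longleftrightarrow>
     feasible_flow Com S \<mu> f \<and>
     (\<forall>h\<in>Com. \<exists>lam::real. \<forall>r\<in>S h.
        (f h r > 0 \<longrightarrow> c r (load Com S f r) = lam) \<and> c r (load Com S f r) \<ge> lam)"

definition eq_load ::
  "'r set \<Rightarrow> ('r \<Rightarrow> real \<Rightarrow> real) \<Rightarrow> 'h set \<Rightarrow> ('h \<Rightarrow> 'r set) \<Rightarrow> ('h \<Rightarrow> real)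
     \<Rightarrow> ('r \<Rightarrow> real) \<Rightarrow> bool" where
  "eq_load Res c Com S \<mu> x \<longleftrightarrow>
     (\<exists>f. wardrop_eq c Com S \<mu> f \<and> (\<forall>r\<in>Res. x r = load Com S f r))"

text \<open>Equilibrium cost of commodity h: the minimal cost over its feasible resources
  at an equilibrium (this is the common value of lambda^h; independence of the
  chosen equilibrium is a known fact, so THE is well defined).\<close>

definition eq_cost ::
  "('r \<Rightarrow> real \<Rightarrow> real) \<Rightarrow> 'h set \<Rightarrow> ('h \<Rightarrow> 'r set) \<Rightarrow> ('h \<Rightarrow> real) \<Rightarrow> 'h \<Rightarrow> real" where
  "eq_cost c Com S \<mu> h =
     (THE l. \<exists>f. wardrop_eq c Com S \<mu> f \<and> l = Min ((\<lambda>r. c r (load Com S f r)) ` S h))"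

definition weak_order_on :: "'h set \<Rightarrow> ('h \<Rightarrow> 'h \<Rightarrow> bool) \<Rightarrow> bool" where
  "weak_order_on Com le \<longleftrightarrow>
     (\<forall>h\<in>Com. \<forall>h'\<in>Com. le h h' \<or> le h' h) \<and>
     (\<forall>h1\<in>Com. \<forall>h2\<in>Com. \<forall>h3\<in>Com. le h1 h2 \<longrightarrow> le h2 h3 \<longrightarrow> le h1 h3)"

definition Gamma_region ::
  "('r \<Rightarrow> real \<Rightarrow> real) \<Rightarrow> 'h set \<Rightarrow> ('h \<Rightarrow> 'r set) \<Rightarrow> ('h \<Rightarrow> 'h \<Rightarrow> bool) \<Rightarrow> ('h \<Rightarrow> real) set" where
  "Gamma_region c Com S le =
     {\<mu>. (\<forall>h\<in>Com. \<mu> h \<ge> 0) \<and>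
          (\<forall>h\<in>Com. \<forall>h'\<in>Com. eq_cost c Com S \<mu> h \<le> eq_cost c Com S \<mu> h' \<longleftrightarrow> le h h')}"

definition cost_class :: "'h set \<Rightarrow> ('h \<Rightarrow> 'h \<Rightarrow> bool) \<Rightarrow> 'h set \<Rightarrow> bool" where
  "cost_class Com le C \<longleftrightarrow> (\<exists>h0\<in>Com. C = {h\<in>Com. le h h0 \<and> le h0 h})"

definition above_class :: "'h set \<Rightarrow> ('h \<Rightarrow> 'h \<Rightarrow> bool) \<Rightarrow> 'h set \<Rightarrow> 'h set" where
  "above_class Com le C = {h'\<in>Com. \<forall>h\<in>C. le h h' \<and> \<not> le h' h}"

definition res_C ::
  "'h set \<Rightarrow> ('h \<Rightarrow> 'r set) \<Rightarrow> ('h \<Rightarrow> 'h \<Rightarrow> bool) \<Rightarrow> 'h set \<Rightarrow> 'r set" where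
  "res_C Com S le C = (\<Union>h\<in>C. S h) - (\<Union>h'\<in>above_class Com le C. S h')"

definition eq_load_single :: "'r set \<Rightarrow> ('r \<Rightarrow> real \<Rightarrow> real) \<Rightarrow> real \<Rightarrow> ('r \<Rightarrow> real) \<Rightarrow> bool" where
  "eq_load_single RC c d x \<longleftrightarrow> eq_load RC c {()} (\<lambda>_. RC) (\<lambda>_. d) x"

definition comonotonic :: "'i set \<Rightarrow> 'w set \<Rightarrow> ('i \<Rightarrow> 'w \<Rightarrow> real) \<Rightarrow> bool" where
  "comonotonic A \<Omega> \<psi> \<longleftrightarrow>
     (\<forall>i\<in>A. \<forall>j\<in>A. \<forall>w1\<in>\<Omega>. \<forall>w2\<in>\<Omega>. (\<psi> i w1 - \<psi> i w2) * (\<psi> j w1 - \<psi> j w2) \<ge> 0)"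

text \<open>The (unique, when it is unique) equilibrium load on r at demand mu.\<close>
definition eq_load_val ::
  "'r set \<Rightarrow> ('r \<Rightarrow> real \<Rightarrow> real) \<Rightarrow> 'h set \<Rightarrow> ('h \<Rightarrow> 'r set) \<Rightarrow> ('h \<Rightarrow> real) \<Rightarrow> 'r \<Rightarrow> real" where
  "eq_load_val Res c Com S \<mu> r = (THE v. \<exists>x. eq_load Res c Com S \<mu> x \<and> x r = v)"

end

theory Submission
  imports Defs
begin

text \<open>Minimisers of the Beckmann potential, the sum over the resources r of the integral of
  c r from 0 to the load of r, are Wardrop equilibria, so equilibria exist; the variational
  inequality and the monotonicity of the costs show that the resource costs, and hence the
  equilibrium costs of the commodities, do not depend on the chosen equilibrium. At an
  equilibrium a commodity puts flow only on resources whose cost is its equilibrium cost, and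
  all its resources cost at least that much. On the resources of a cost class C that no costlier
  commodity may use, the flow therefore comes exactly from the commodities of C, and every used
  resource has the common cost of C: the loads form an equilibrium of the single-commodity game
  with demand the total demand of C.

  For (b), unique equilibrium loads of a single-commodity game are nondecreasing in the demand:
  if a load decreased, the two equilibria would share their cost level, and interpolating
  between their pointwise minimum and maximum would give a second equilibrium at the smaller
  demand.\<close>

lemma load_nonneg:
  assumes "feasible_flow Com S \<mu> f"
  shows "0 \<le> load Com S f r"
  using assms unfolding feasible_flow_def load_def by (auto intro!: sum_nonneg)

lemma load_cong:
  assumes "\<And>h r. h \<in> Com \<Longrightarrow> r \<in> S h \<Longrightarrow> f h r = g h r"
  shows "load Com S f = load Com S g"
  using assms unfolding load_def by (auto intro!: ext sum.cong)

lemma singleton_gameD: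
  assumes "singleton_game Res c Com S"
  shows "finite Res" "finite Com"
    "\<And>r. r \<in> Res \<Longrightarrow> continuous_on {0..} (c r)" "\<And>r. r \<in> Res \<Longrightarrow> mono_on {0..} (c r)"
    "\<And>h. h \<in> Com \<Longrightarrow> S h \<noteq> {}" "\<And>h. h \<in> Com \<Longrightarrow> S h \<subseteq> Res" "\<And>h. h \<in> Com \<Longrightarrow> finite (S h)"
  using assms unfolding singleton_game_def by (auto dest: finite_subset)

lemma wardrop_eq_feasible: "wardrop_eq c Com S \<mu> f \<Longrightarrow> feasible_flow Com S \<mu> f"
  unfolding wardrop_eq_def by simp

definition min_cost ::
  "('r \<Rightarrow> real \<Rightarrow> real) \<Rightarrow> 'h set \<Rightarrow> ('h \<Rightarrow> 'r set) \<Rightarrow> ('h \<Rightarrow> 'r \<Rightarrow> real) \<Rightarrow> 'h \<Rightarrow> real" where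
  "min_cost c Com S f h = Min ((\<lambda>r. c r (load Com S f r)) ` S h)"

lemma min_cost_le:
  assumes "singleton_game Res c Com S" "h \<in> Com" "r \<in> S h"
  shows "min_cost c Com S f h \<le> c r (load Com S f r)"
  unfolding min_cost_def using singleton_gameD(7)[OF assms(1,2)] assms(3) by simp

lemma wardrop_eq_min_cost:
  assumes game: "singleton_game Res c Com S" and w: "wardrop_eq c Com S \<mu> f"
    and h: "h \<in> Com" and r: "r \<in> S h" and pos: "0 < f h r"
  shows "c r (load Com S f r) = min_cost c Com S f h"
proof -
  obtain lam where lam: "\<forall>q\<in>S h. (0 < f h q \<longrightarrow> c q (load Com S f q) = lam) \<and> lam \<le> c q (load Com S f q)"
    using w h unfolding wardrop_eq_def by blast
  have "lam \<le> min_cost c Com S f h"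
    unfolding min_cost_def using singleton_gameD(5,7)[OF game h] lam by simp
  moreover have "c r (load Com S f r) = lam" using lam r pos by blast
  ultimately show ?thesis using min_cost_le[OF game h r, of f] by simp
qed

section \<open>Existence via the Beckmann potential\<close>

lemma mono_integral_increment_bounds:
  fixes g :: "real \<Rightarrow> real"
  assumes cont: "continuous_on {0..} g" and mono: "mono_on {0..} g" and "0 \<le> a" "a \<le> b"
  shows "g a * (b - a) \<le> integral {0..b} g - integral {0..a} g"
    and "integral {0..b} g - integral {0..a} g \<le> g b * (b - a)"
proof -
  have int: "g integrable_on {0..b}" "g integrable_on {a..b}"
    using assms by (auto intro!: integrable_continuous_real continuous_on_subset[OF cont])
  have diff: "integral {0..b} g - integral {0..a} g = integral {a..b} g"
    using Henstock_Kurzweil_Integration.integral_combine[OF assms(3,4) int(1)] by simp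
  have "integral {a..b} (\<lambda>_. g a) \<le> integral {a..b} g"
    by (rule integral_le[OF _ int(2)]) (use assms in \<open>auto intro!: mono_onD[OF mono]\<close>)
  moreover have "integral {a..b} g \<le> integral {a..b} (\<lambda>_. g b)"
    by (rule integral_le[OF int(2)]) (use assms in \<open>auto intro!: mono_onD[OF mono]\<close>)
  ultimately show "g a * (b - a) \<le> integral {0..b} g - integral {0..a} g"
    and "integral {0..b} g - integral {0..a} g \<le> g b * (b - a)"
    using assms diff by (simp_all add: mult.commute)
qed

lemma continuous_shift_gap:
  fixes g1 g2 :: "real \<Rightarrow> real"
  assumes cont: "continuous_on {0..} g1" "continuous_on {0..} g2"
    and "0 \<le> b" "0 < e" "e \<le> a" and gap: "g1 b < g2 a"
  shows "\<exists>\<epsilon>. 0 < \<epsilon> \<and> \<epsilon> \<le> e \<and> g1 (b + \<epsilon>) < g2 (a - \<epsilon>)"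
proof -
  define \<delta> where "\<delta> = (g2 a - g1 b) / 2"
  have "0 < \<delta>" using gap by (simp add: \<delta>_def)
  obtain \<eta>1 where "0 < \<eta>1" and \<eta>1: "\<And>t. 0 \<le> t \<Longrightarrow> dist t b < \<eta>1 \<Longrightarrow> dist (g1 t) (g1 b) < \<delta>"
    using cont(1) \<open>0 \<le> b\<close> \<open>0 < \<delta>\<close> unfolding continuous_on_iff by (metis atLeast_iff)
  obtain \<eta>2 where "0 < \<eta>2" and \<eta>2: "\<And>t. 0 \<le> t \<Longrightarrow> dist t a < \<eta>2 \<Longrightarrow> dist (g2 t) (g2 a) < \<delta>"
    using cont(2) assms(4,5) \<open>0 < \<delta>\<close> unfolding continuous_on_iff
    by (metis atLeast_iff order.trans less_imp_le)
  define \<epsilon> where "\<epsilon> = min e (min (\<eta>1 / 2) (\<eta>2 / 2))"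
  have \<epsilon>: "0 < \<epsilon>" "\<epsilon> \<le> e" "\<epsilon> < \<eta>1" "\<epsilon> < \<eta>2"
    using \<open>0 < e\<close> \<open>0 < \<eta>1\<close> \<open>0 < \<eta>2\<close> by (auto simp: \<epsilon>_def)
  have "g1 (b + \<epsilon>) < g1 b + \<delta>"
    using \<eta>1[of "b + \<epsilon>"] \<epsilon> \<open>0 \<le> b\<close> by (auto simp: dist_real_def)
  also have "g1 b + \<delta> = g2 a - \<delta>" by (simp add: \<delta>_def field_simps)
  also have "g2 a - \<delta> < g2 (a - \<epsilon>)"
    using \<eta>2[of "a - \<epsilon>"] \<epsilon> \<open>e \<le> a\<close> by (auto simp: dist_real_def)
  finally show ?thesis using \<epsilon> by blast
qed

definition beckmann ::
  "'r set \<Rightarrow> ('r \<Rightarrow> real \<Rightarrow> real) \<Rightarrow> 'h set \<Rightarrow> ('h \<Rightarrow> 'r set) \<Rightarrow> ('h \<Rightarrow> 'r \<Rightarrow> real) \<Rightarrow> real" where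
  "beckmann Res c Com S f = (\<Sum>r\<in>Res. integral {0..load Com S f r} (c r))"

definition shift_flow :: "('h \<Rightarrow> 'r \<Rightarrow> real) \<Rightarrow> 'h \<Rightarrow> 'r \<Rightarrow> 'r \<Rightarrow> real \<Rightarrow> 'h \<Rightarrow> 'r \<Rightarrow> real" where
  "shift_flow f h r s \<epsilon> = f(h := (f h)(r := f h r - \<epsilon>, s := f h s + \<epsilon>))"

lemma load_shift_flow:
  assumes "finite Com" "h \<in> Com" "r \<in> S h" "s \<in> S h" "r \<noteq> s"
  shows "load Com S (shift_flow f h r s \<epsilon>) q =
           load Com S f q - (if q = r then \<epsilon> else 0) + (if q = s then \<epsilon> else 0)"
proof -
  have "shift_flow f h r s \<epsilon> h' q =
      f h' q - (if h' = h \<and> q = r then \<epsilon> else 0) + (if h' = h \<and> q = s then \<epsilon> else 0)" for h'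
    using assms(5) by (simp add: shift_flow_def)
  then show ?thesis
    using assms unfolding load_def by (simp add: sum.distrib sum_subtractf sum.delta' conj_commute)
qed

lemma feasible_shift_flow:
  assumes feas: "feasible_flow Com S \<mu> f" and "finite (S h)" "r \<in> S h" "s \<in> S h" "r \<noteq> s"
    and "0 \<le> \<epsilon>" "\<epsilon> \<le> f h r"
  shows "feasible_flow Com S \<mu> (shift_flow f h r s \<epsilon>)"
  unfolding feasible_flow_def
proof (intro ballI conjI)
  fix h' assume h': "h' \<in> Com"
  show "0 \<le> shift_flow f h r s \<epsilon> h' q" if "q \<in> S h'" for q
    using feas h' that assms(5-7) unfolding feasible_flow_def shift_flow_def by auto
  have "(\<Sum>q\<in>S h. shift_flow f h r s \<epsilon> h q) = (\<Sum>q\<in>S h. f h q)"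
    using assms(2-5) by (simp add: shift_flow_def sum.remove[of "S h" r] sum.remove[of "S h - {r}" s])
  then show "(\<Sum>q\<in>S h'. shift_flow f h r s \<epsilon> h' q) = \<mu> h'"
    using feas h' unfolding feasible_flow_def by (cases "h' = h") (auto simp: shift_flow_def)
qed

lemma beckmann_minimal_used_cost_le:
  assumes game: "singleton_game Res c Com S" and feas: "feasible_flow Com S \<mu> f"
    and min: "\<And>g. feasible_flow Com S \<mu> g \<Longrightarrow> beckmann Res c Com S f \<le> beckmann Res c Com S g"
    and h: "h \<in> Com" and r: "r \<in> S h" and s: "s \<in> S h" and pos: "0 < f h r"
  shows "c r (load Com S f r) \<le> c s (load Com S f s)"
proof (rule ccontr)
  note G = singleton_gameD[OF game]
  define a where "a = load Com S f r"
  define b where "b = load Com S f s"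
  define I where "I q t = integral {0..t} (c q)" for q t
  assume "\<not> ?thesis"
  then have gap: "c s b < c r a" by (simp add: a_def b_def)
  then have "r \<noteq> s" by (auto simp: a_def b_def)
  have rs: "r \<in> Res" "s \<in> Res" using G(6)[OF h] r s by auto
  have "f h r \<le> a"
    unfolding a_def load_def using feas h r G(2) unfolding feasible_flow_def
    by (intro member_le_sum) auto
  moreover have "0 \<le> b" unfolding b_def using load_nonneg[OF feas] .
  ultimately obtain \<epsilon> where \<epsilon>: "0 < \<epsilon>" "\<epsilon> \<le> f h r" and cost_gap: "c s (b + \<epsilon>) < c r (a - \<epsilon>)"
    using continuous_shift_gap[OF G(3)[OF rs(2)] G(3)[OF rs(1)] _ pos _ gap] by blast
  define g where "g = shift_flow f h r s \<epsilon>"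
  \<comment> \<open>Moving \<epsilon> from r to s raises the potential on s by less than it lowers it on r.\<close>
  have "I s (b + \<epsilon>) - I s b \<le> c s (b + \<epsilon>) * \<epsilon>"
    using mono_integral_increment_bounds(2)[OF G(3,4)[OF rs(2)] \<open>0 \<le> b\<close>, of "b + \<epsilon>"] \<epsilon>
    by (simp add: I_def)
  also have "\<dots> < c r (a - \<epsilon>) * \<epsilon>" using cost_gap \<epsilon> by simp
  also have "\<dots> \<le> I r a - I r (a - \<epsilon>)"
    using mono_integral_increment_bounds(1)[OF G(3,4)[OF rs(1)], of "a - \<epsilon>" a] \<epsilon> \<open>f h r \<le> a\<close>
    by (simp add: I_def)
  finally have "beckmann Res c Com S g < beckmann Res c Com S f"
  proof -
    assume less: "I s (b + \<epsilon>) - I s b < I r a - I r (a - \<epsilon>)"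
    have "I q (load Com S g q) = I q (load Com S f q)
        + (if q = r then I r (a - \<epsilon>) - I r a else 0) + (if q = s then I s (b + \<epsilon>) - I s b else 0)" for q
      using \<open>r \<noteq> s\<close> load_shift_flow[where S = S, OF G(2) h r s \<open>r \<noteq> s\<close>]
      by (simp add: g_def a_def b_def)
    then have "beckmann Res c Com S g = beckmann Res c Com S f
        + (I r (a - \<epsilon>) - I r a) + (I s (b + \<epsilon>) - I s b)"
      using G(1) rs unfolding beckmann_def I_def[symmetric] by (simp add: sum.distrib)
    then show ?thesis using less by simp
  qed
  moreover have "feasible_flow Com S \<mu> g"
    unfolding g_def using feasible_shift_flow[OF feas G(7)[OF h] r s \<open>r \<noteq> s\<close>] \<epsilon> by simp
  ultimately show False using min by fastforce
qed

lemma beckmann_minimal_imp_wardrop_eq: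
  assumes game: "singleton_game Res c Com S" and feas: "feasible_flow Com S \<mu> f"
    and min: "\<And>g. feasible_flow Com S \<mu> g \<Longrightarrow> beckmann Res c Com S f \<le> beckmann Res c Com S g"
  shows "wardrop_eq c Com S \<mu> f"
  unfolding wardrop_eq_def
proof (intro conjI feas ballI)
  fix h assume h: "h \<in> Com"
  have "min_cost c Com S f h \<in> (\<lambda>r. c r (load Com S f r)) ` S h"
    unfolding min_cost_def using singleton_gameD(5,7)[OF game h] by (intro Min_in) auto
  then obtain s where s: "s \<in> S h" "c s (load Com S f s) = min_cost c Com S f h"
    by auto
  have "(0 < f h r \<longrightarrow> c r (load Com S f r) = min_cost c Com S f h) \<and>
      min_cost c Com S f h \<le> c r (load Com S f r)" if r: "r \<in> S h" for r
    using beckmann_minimal_used_cost_le[OF game feas min h r s(1)] min_cost_le[OF game h r, of f] s(2)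
    by auto
  then show "\<exists>lam. \<forall>r\<in>S h. (0 < f h r \<longrightarrow> c r (load Com S f r) = lam) \<and> lam \<le> c r (load Com S f r)"
    by blast
qed

lemma compact_fun_box:
  fixes B :: "'a \<Rightarrow> real set"
  assumes "\<And>p. compact (B p)"
  shows "compact {F. \<forall>p. F p \<in> B p}"
proof -
  have "compactin (product_topology (\<lambda>_. euclidean) UNIV) (Pi\<^sub>E UNIV B)"
    using assms by (simp add: compactin_PiE)
  moreover have "Pi\<^sub>E UNIV B = {F. \<forall>p. F p \<in> B p}"
    by (auto simp: PiE_iff)
  ultimately show ?thesis by (simp add: euclidean_product_topology)
qed

lemma feasible_flow_exists:
  assumes game: "singleton_game Res c Com S" and \<mu>: "\<forall>h\<in>Com. 0 \<le> \<mu> h"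
  shows "\<exists>f. feasible_flow Com S \<mu> f"
proof -
  define f where "f h r = (if r = (SOME r. r \<in> S h) then \<mu> h else 0)" for h r
  have "(SOME r. r \<in> S h) \<in> S h" if "h \<in> Com" for h
    using singleton_gameD(5)[OF game that] by (simp add: some_in_eq)
  then have "feasible_flow Com S \<mu> f"
    unfolding feasible_flow_def f_def using \<mu> singleton_gameD(7)[OF game] by (simp add: sum.delta)
  then show ?thesis by blast
qed

lemma feasible_flow_le_demand:
  assumes "feasible_flow Com S \<mu> f" "finite (S h)" "h \<in> Com" "r \<in> S h"
  shows "f h r \<le> \<mu> h"
proof -
  have "f h r \<le> (\<Sum>q\<in>S h. f h q)"
    using assms unfolding feasible_flow_def by (intro member_le_sum) auto
  then show ?thesis using assms unfolding feasible_flow_def by simp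
qed

text \<open>Flows encoded as functions on pairs that vanish off the feasible strategies; unlike the
  feasible flows themselves, they form a compact set.\<close>

definition supported_flows :: "'h set \<Rightarrow> ('h \<Rightarrow> 'r set) \<Rightarrow> ('h \<Rightarrow> real) \<Rightarrow> ('h \<times> 'r \<Rightarrow> real) set" where
  "supported_flows Com S \<mu> =
     {F. feasible_flow Com S \<mu> (curry F) \<and> (\<forall>h r. h \<notin> Com \<or> r \<notin> S h \<longrightarrow> F (h, r) = 0)}"

lemma supported_flows_restrict:
  assumes "feasible_flow Com S \<mu> g"
  obtains F where "F \<in> supported_flows Com S \<mu>" and "load Com S (curry F) = load Com S g"
proof
  define F where "F = (\<lambda>(h, r). if h \<in> Com \<and> r \<in> S h then g h r else (0::real))"
  show "load Com S (curry F) = load Com S g"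
    by (rule load_cong) (simp add: F_def)
  have "curry F h r = g h r" if "h \<in> Com" "r \<in> S h" for h r
    using that by (simp add: F_def)
  then have "feasible_flow Com S \<mu> (curry F)"
    using assms unfolding feasible_flow_def by (simp cong: sum.cong_simp)
  then show "F \<in> supported_flows Com S \<mu>"
    unfolding supported_flows_def by (simp add: F_def)
qed

lemma compact_supported_flows:
  assumes game: "singleton_game Res c Com S"
  shows "compact (supported_flows Com S \<mu>)"
proof -
  define B where "B p = (if fst p \<in> Com \<and> snd p \<in> S (fst p) then {0..\<mu> (fst p)} else {0::real})" for p
  have "F (h, r) \<le> \<mu> h" if "feasible_flow Com S \<mu> (curry F)" "h \<in> Com" "r \<in> S h" for F h r
    using feasible_flow_le_demand[OF that(1) singleton_gameD(7)[OF game that(2)] that(2,3)] by simp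
  then have box: "supported_flows Com S \<mu> =
      {F. \<forall>p. F p \<in> B p} \<inter> (\<Inter>h\<in>Com. {F. (\<Sum>r\<in>S h. F (h, r)) = \<mu> h})"
    unfolding supported_flows_def B_def feasible_flow_def by (auto split: if_splits)
  have "closed {F. (\<Sum>r\<in>S h. F (h, r)) = \<mu> h}" for h
    by (rule closed_Collect_eq) (auto intro!: continuous_on_sum)
  then show ?thesis
    unfolding box by (intro compact_Int_closed compact_fun_box closed_INT) (auto simp: B_def)
qed

lemma continuous_on_beckmann_supported_flows:
  assumes game: "singleton_game Res c Com S" and \<mu>: "\<forall>h\<in>Com. 0 \<le> \<mu> h"
  shows "continuous_on (supported_flows Com S \<mu>) (\<lambda>F. beckmann Res c Com S (curry F))"
  unfolding beckmann_def
proof (intro continuous_on_sum)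
  fix r assume "r \<in> Res"
  define M where "M = (\<Sum>h\<in>Com. \<mu> h)"
  have load_bounds: "load Com S (curry F) r \<in> {0..M}" if F: "F \<in> supported_flows Com S \<mu>" for F
  proof -
    have feas: "feasible_flow Com S \<mu> (curry F)" using F unfolding supported_flows_def by blast
    have "load Com S (curry F) r \<le> (\<Sum>h\<in>{h\<in>Com. r \<in> S h}. \<mu> h)"
      unfolding load_def using feasible_flow_le_demand[OF feas] singleton_gameD(7)[OF game]
      by (intro sum_mono) auto
    also have "\<dots> \<le> M"
      unfolding M_def using \<mu> singleton_gameD(2)[OF game] by (intro sum_mono2) auto
    finally show ?thesis using load_nonneg[OF feas] by simp
  qed
  have int: "continuous_on {0..M} (\<lambda>t. integral {0..t} (c r))"
    by (intro indefinite_integral_continuous_1 integrable_continuous_real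
        continuous_on_subset[OF singleton_gameD(3)[OF game \<open>r \<in> Res\<close>]]) auto
  have ld: "continuous_on (supported_flows Com S \<mu>) (\<lambda>F. load Com S (curry F) r)"
    unfolding load_def
    by (auto intro!: continuous_on_sum continuous_on_subset[OF continuous_on_product_coordinates])
  show "continuous_on (supported_flows Com S \<mu>) (\<lambda>F. integral {0..load Com S (curry F) r} (c r))"
    using continuous_on_compose2[OF int ld] load_bounds by (simp add: image_subset_iff)
qed

lemma beckmann_minimizer_exists:
  assumes game: "singleton_game Res c Com S" and \<mu>: "\<forall>h\<in>Com. 0 \<le> \<mu> h"
  obtains f where "feasible_flow Com S \<mu> f"
    and "\<And>g. feasible_flow Com S \<mu> g \<Longrightarrow> beckmann Res c Com S f \<le> beckmann Res c Com S g"
proof -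
  obtain f0 where "feasible_flow Com S \<mu> f0" using feasible_flow_exists[OF assms] ..
  then have "supported_flows Com S \<mu> \<noteq> {}" using supported_flows_restrict by blast
  then obtain F where F: "F \<in> supported_flows Com S \<mu>"
    and F_min: "\<And>F'. F' \<in> supported_flows Com S \<mu> \<Longrightarrow>
                 beckmann Res c Com S (curry F) \<le> beckmann Res c Com S (curry F')"
    using continuous_attains_inf[OF compact_supported_flows[OF game]
        _ continuous_on_beckmann_supported_flows[OF assms]] by blast
  have "beckmann Res c Com S (curry F) \<le> beckmann Res c Com S g" if g: "feasible_flow Com S \<mu> g" for g
  proof -
    obtain G where "G \<in> supported_flows Com S \<mu>" "load Com S (curry G) = load Com S g"
      using supported_flows_restrict[OF g] .
    then show ?thesis using F_min unfolding beckmann_def by metis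
  qed
  moreover have "feasible_flow Com S \<mu> (curry F)" using F unfolding supported_flows_def by blast
  ultimately show thesis using that by blast
qed

lemma wardrop_eq_exists:
  assumes game: "singleton_game Res c Com S" and "\<forall>h\<in>Com. 0 \<le> \<mu> h"
  obtains f where "wardrop_eq c Com S \<mu> f"
proof -
  obtain f where "feasible_flow Com S \<mu> f"
    and "\<And>g. feasible_flow Com S \<mu> g \<Longrightarrow> beckmann Res c Com S f \<le> beckmann Res c Com S g"
    using beckmann_minimizer_exists[OF assms] by blast
  then show thesis using beckmann_minimal_imp_wardrop_eq[OF game] that by blast
qed

section \<open>Uniqueness of the equilibrium costs\<close>

lemma sum_over_commodities_swap:
  assumes "singleton_game Res c Com S"
  shows "(\<Sum>h\<in>Com. \<Sum>r\<in>S h. \<phi> h r) = (\<Sum>r\<in>Res. \<Sum>h\<in>{h\<in>Com. r \<in> S h}. \<phi> h r)"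
proof -
  note game = singleton_gameD[OF assms]
  have "(\<Sum>h\<in>Com. \<Sum>r\<in>S h. \<phi> h r) = (\<Sum>h\<in>Com. \<Sum>r\<in>{r. r \<in> Res \<and> r \<in> S h}. \<phi> h r)"
    using game(6) by (intro sum.cong refl) auto
  also have "\<dots> = (\<Sum>r\<in>Res. \<Sum>h\<in>{h. h \<in> Com \<and> r \<in> S h}. \<phi> h r)"
    by (rule sum.swap_restrict) (use game in auto)
  finally show ?thesis by simp
qed

lemma wardrop_variational_inequality:
  assumes game: "singleton_game Res c Com S"
    and f: "wardrop_eq c Com S \<mu> f" and g: "feasible_flow Com S \<mu> g"
  shows "0 \<le> (\<Sum>r\<in>Res. c r (load Com S f r) * (load Com S g r - load Com S f r))"
proof -
  have "0 = (\<Sum>h\<in>Com. \<Sum>r\<in>S h. min_cost c Com S f h * (g h r - f h r))"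
    using f g unfolding wardrop_eq_def feasible_flow_def
    by (simp add: sum_distrib_left[symmetric] sum_subtractf)
  also have "\<dots> \<le> (\<Sum>h\<in>Com. \<Sum>r\<in>S h. c r (load Com S f r) * (g h r - f h r))"
  proof (intro sum_mono)
    fix h r assume h: "h \<in> Com" and r: "r \<in> S h"
    have "0 \<le> f h r" "0 \<le> g h r"
      using f g h r unfolding wardrop_eq_def feasible_flow_def by auto
    then show "min_cost c Com S f h * (g h r - f h r) \<le> c r (load Com S f r) * (g h r - f h r)"
      using wardrop_eq_min_cost[OF game f h r] min_cost_le[OF game h r, of f]
      by (cases "f h r = 0") (auto intro: mult_right_mono)
  qed
  also have "\<dots> = (\<Sum>r\<in>Res. c r (load Com S f r) * (load Com S g r - load Com S f r))"
    unfolding sum_over_commodities_swap[OF game] load_def sum_subtractf[symmetric] sum_distrib_left ..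
  finally show ?thesis .
qed

lemma wardrop_eq_costs_unique:
  assumes game: "singleton_game Res c Com S"
    and f: "wardrop_eq c Com S \<mu> f" and g: "wardrop_eq c Com S \<mu> g" and r: "r \<in> Res"
  shows "c r (load Com S f r) = c r (load Com S g r)"
proof -
  define x where "x = load Com S f"
  define y where "y = load Com S g"
  define t where "t q = (c q (y q) - c q (x q)) * (y q - x q)" for q
  have t_nonneg: "0 \<le> t q" if "q \<in> Res" for q
  proof -
    have "0 \<le> x q" "0 \<le> y q"
      unfolding x_def y_def
      using load_nonneg[OF wardrop_eq_feasible[OF f]] load_nonneg[OF wardrop_eq_feasible[OF g]] by auto
    then show ?thesis
      using mono_onD[OF singleton_gameD(4)[OF game that]]
      by (cases "x q \<le> y q") (auto simp: t_def intro: mult_nonpos_nonpos)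
  qed
  have "(\<Sum>q\<in>Res. t q) =
      - ((\<Sum>q\<in>Res. c q (x q) * (y q - x q)) + (\<Sum>q\<in>Res. c q (y q) * (x q - y q)))"
    by (simp add: t_def sum_negf[symmetric] sum.distrib[symmetric] algebra_simps)
  also have "\<dots> \<le> 0"
    using wardrop_variational_inequality[OF game f wardrop_eq_feasible[OF g]]
      wardrop_variational_inequality[OF game g wardrop_eq_feasible[OF f]]
    unfolding x_def y_def by simp
  finally have "t r = 0"
    using sum_nonneg_eq_0_iff[OF singleton_gameD(1)[OF game]] t_nonneg r
    by (metis antisym sum_nonneg)
  then show ?thesis by (auto simp: t_def x_def y_def)
qed

lemma eq_cost_eq_min_cost:
  assumes game: "singleton_game Res c Com S" and f: "wardrop_eq c Com S \<mu> f" and h: "h \<in> Com"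
  shows "eq_cost c Com S \<mu> h = min_cost c Com S f h"
  unfolding eq_cost_def min_cost_def[symmetric]
proof (rule the_equality)
  fix l assume "\<exists>g. wardrop_eq c Com S \<mu> g \<and> l = min_cost c Com S g h"
  then obtain g where g: "wardrop_eq c Com S \<mu> g" and l: "l = min_cost c Com S g h" by blast
  have "c r (load Com S g r) = c r (load Com S f r)" if "r \<in> S h" for r
    using wardrop_eq_costs_unique[OF game g f] singleton_gameD(6)[OF game h] that by blast
  then show "l = min_cost c Com S f h"
    unfolding l min_cost_def by (metis (no_types, lifting) image_cong)
qed (use f in blast)

lemma eq_load_val_eq:
  assumes game: "singleton_game Res c Com S" and \<mu>: "\<forall>h\<in>Com. 0 \<le> \<mu> h"
    and v: "\<And>x. eq_load Res c Com S \<mu> x \<Longrightarrow> x r = v"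
  shows "eq_load_val Res c Com S \<mu> r = v"
proof -
  obtain f where "wardrop_eq c Com S \<mu> f" using wardrop_eq_exists[OF game \<mu>] .
  then have "eq_load Res c Com S \<mu> (load Com S f)" unfolding eq_load_def by blast
  then show ?thesis
    unfolding eq_load_val_def using v by (intro the_equality) blast+
qed

section \<open>The single-commodity game\<close>

definition single_wardrop :: "'r set \<Rightarrow> ('r \<Rightarrow> real \<Rightarrow> real) \<Rightarrow> real \<Rightarrow> ('r \<Rightarrow> real) \<Rightarrow> real \<Rightarrow> bool" where
  "single_wardrop R c d x lam \<longleftrightarrow>
     (\<forall>r\<in>R. 0 \<le> x r \<and> lam \<le> c r (x r) \<and> (0 < x r \<longrightarrow> c r (x r) = lam)) \<and> (\<Sum>r\<in>R. x r) = d"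

lemma single_wardrop_cong:
  assumes "\<forall>r\<in>R. x r = y r"
  shows "single_wardrop R c d x lam \<longleftrightarrow> single_wardrop R c d y lam"
  using assms unfolding single_wardrop_def by (simp cong: sum.cong)

lemma eq_load_single_iff: "eq_load_single R c d x \<longleftrightarrow> (\<exists>lam. single_wardrop R c d x lam)"
proof -
  have load_unit: "load {()} (\<lambda>_. R) g r = g () r" if "r \<in> R" for g r
    using that unfolding load_def by (simp add: UNIV_unit)
  have wardrop_unit:
    "wardrop_eq c {()} (\<lambda>_. R) (\<lambda>_. d) g \<longleftrightarrow> (\<exists>lam. single_wardrop R c d (g ()) lam)" for g
    unfolding wardrop_eq_def feasible_flow_def single_wardrop_def
    by (auto simp: load_unit cong: ball_cong)
  show ?thesis
  proof
    assume "eq_load_single R c d x"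
    then obtain g lam where "single_wardrop R c d (g ()) lam" "\<forall>r\<in>R. x r = g () r"
      unfolding eq_load_single_def eq_load_def wardrop_unit by (auto simp: load_unit)
    then show "\<exists>lam. single_wardrop R c d x lam"
      using single_wardrop_cong by blast
  next
    assume "\<exists>lam. single_wardrop R c d x lam"
    then have "wardrop_eq c {()} (\<lambda>_. R) (\<lambda>_. d) (\<lambda>_. x)"
      unfolding wardrop_unit by simp
    then show "eq_load_single R c d x"
      unfolding eq_load_single_def eq_load_def by (auto simp: load_unit)
  qed
qed

lemma single_wardrop_common_level:
  assumes fin: "finite R" and mono: "\<And>r. r \<in> R \<Longrightarrow> mono_on {0..} (c r)"
    and x: "single_wardrop R c d1 x lam1" and y: "single_wardrop R c d2 y lam2"
    and "d1 \<le> d2" and r0: "r0 \<in> R" "y r0 < x r0"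
  shows "lam1 = lam2"
proof -
  have x_eq: "\<forall>r\<in>R. 0 \<le> x r \<and> lam1 \<le> c r (x r) \<and> (0 < x r \<longrightarrow> c r (x r) = lam1)"
    and y_eq: "\<forall>r\<in>R. 0 \<le> y r \<and> lam2 \<le> c r (y r) \<and> (0 < y r \<longrightarrow> c r (y r) = lam2)"
    using x y unfolding single_wardrop_def by auto
  obtain s where s: "s \<in> R" "x s < y s"
  proof (rule ccontr)
    assume "\<not> thesis"
    then have "\<forall>s\<in>R. y s \<le> x s" using that by force
    then have "(\<Sum>r\<in>R. y r) < (\<Sum>r\<in>R. x r)"
      using r0 by (intro sum_strict_mono_ex1[OF fin]) auto
    then show False using x y \<open>d1 \<le> d2\<close> unfolding single_wardrop_def by simp
  qed
  have "lam2 \<le> c r0 (y r0)" using y_eq r0 by blast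
  also have "\<dots> \<le> c r0 (x r0)" using mono_onD[OF mono] r0 y_eq by fastforce
  also have "\<dots> = lam1" using x_eq r0 y_eq by force
  finally have "lam2 \<le> lam1" .
  have "lam1 \<le> c s (x s)" using x_eq s by blast
  also have "\<dots> \<le> c s (y s)" using mono_onD[OF mono] s x_eq by fastforce
  also have "\<dots> = lam2" using y_eq s x_eq by force
  finally show ?thesis using \<open>lam2 \<le> lam1\<close> by simp
qed

lemma single_wardrop_between:
  assumes mono: "\<And>r. r \<in> R \<Longrightarrow> mono_on {0..} (c r)"
    and x: "single_wardrop R c d1 x lam" and y: "single_wardrop R c d2 y lam"
    and between: "\<And>r. r \<in> R \<Longrightarrow> min (x r) (y r) \<le> z r \<and> z r \<le> max (x r) (y r)"
    and sum_z: "(\<Sum>r\<in>R. z r) = d"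
  shows "single_wardrop R c d z lam"
  unfolding single_wardrop_def
proof (intro conjI ballI sum_z)
  fix r assume r: "r \<in> R"
  have xr: "0 \<le> x r" "lam \<le> c r (x r)" "0 < x r \<Longrightarrow> c r (x r) = lam"
    and yr: "0 \<le> y r" "lam \<le> c r (y r)" "0 < y r \<Longrightarrow> c r (y r) = lam"
    using x y r unfolding single_wardrop_def by auto
  have cmono: "c r a \<le> c r b" if "0 \<le> a" "a \<le> b" for a b
    using mono_onD[OF mono[OF r]] that by simp
  show "0 \<le> z r" using between[OF r] xr yr by linarith
  show "lam \<le> c r (z r)"
    using between[OF r] xr yr cmono by (cases "x r \<le> y r") (force simp: min_def)+
  show "0 < z r \<longrightarrow> c r (z r) = lam"
  proof
    assume "0 < z r"
    then have "c r (z r) \<le> lam"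
      using between[OF r] xr yr cmono \<open>0 \<le> z r\<close> by (cases "x r \<le> y r") (force simp: max_def)+
    then show "c r (z r) = lam" using \<open>lam \<le> c r (z r)\<close> by simp
  qed
qed

lemma single_wardrop_mono_demand:
  assumes fin: "finite R" and mono: "\<And>r. r \<in> R \<Longrightarrow> mono_on {0..} (c r)"
    and "d1 \<le> d2" and x: "single_wardrop R c d1 x lam1" and y: "single_wardrop R c d2 y lam2"
    and unique: "\<And>z lam. single_wardrop R c d1 z lam \<Longrightarrow> \<forall>r\<in>R. z r = x r"
    and r: "r \<in> R"
  shows "x r \<le> y r"
proof (rule ccontr)
  assume "\<not> x r \<le> y r"
  then have r0: "y r < x r" by simp
  have lam: "lam2 = lam1"
    using single_wardrop_common_level[OF fin mono x y \<open>d1 \<le> d2\<close> r r0] by simp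
  define mn where "mn q = min (x q) (y q)" for q
  define mx where "mx q = max (x q) (y q)" for q
  have "(\<Sum>q\<in>R. mn q) < (\<Sum>q\<in>R. x q)"
    using r r0 by (intro sum_strict_mono_ex1[OF fin]) (auto simp: mn_def intro!: bexI[of _ r])
  then have sum_mn: "(\<Sum>q\<in>R. mn q) < d1" using x unfolding single_wardrop_def by simp
  have "(\<Sum>q\<in>R. y q) < (\<Sum>q\<in>R. mx q)"
    using r r0 by (intro sum_strict_mono_ex1[OF fin]) (auto simp: mx_def intro!: bexI[of _ r])
  then have sum_mx: "d2 < (\<Sum>q\<in>R. mx q)" using y unfolding single_wardrop_def by simp
  \<comment> \<open>Interpolating between the pointwise minimum and maximum hits demand d1 strictly below x r.\<close>
  define \<theta> where "\<theta> = (d1 - (\<Sum>q\<in>R. mn q)) / ((\<Sum>q\<in>R. mx q) - (\<Sum>q\<in>R. mn q))"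
  have \<theta>: "0 < \<theta>" "\<theta> < 1" using sum_mn sum_mx \<open>d1 \<le> d2\<close> by (auto simp: \<theta>_def field_simps)
  define w where "w q = mn q + \<theta> * (mx q - mn q)" for q
  have "(\<Sum>q\<in>R. w q) = (\<Sum>q\<in>R. mn q) + \<theta> * ((\<Sum>q\<in>R. mx q) - (\<Sum>q\<in>R. mn q))"
    unfolding w_def by (simp add: sum.distrib sum_distrib_left[symmetric] sum_subtractf)
  also have "\<dots> = d1" using sum_mn sum_mx \<open>d1 \<le> d2\<close> by (simp add: \<theta>_def field_simps)
  finally have sum_w: "(\<Sum>q\<in>R. w q) = d1" .
  have between: "min (x q) (y q) \<le> w q \<and> w q \<le> max (x q) (y q)" for q
  proof -
    have "0 \<le> mx q - mn q" by (simp add: mn_def mx_def)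
    then have "0 \<le> \<theta> * (mx q - mn q)" "\<theta> * (mx q - mn q) \<le> mx q - mn q"
      using \<theta> by (simp_all add: mult_left_le_one_le)
    then show ?thesis by (simp add: w_def mn_def mx_def)
  qed
  have "single_wardrop R c d1 w lam1"
    using single_wardrop_between[OF mono x y[unfolded lam] between sum_w] .
  then have "w r = x r" using unique r by blast
  moreover have "w r < x r"
  proof -
    have "\<theta> * (x r - y r) < 1 * (x r - y r)"
      using \<theta>(2) r0 by (intro mult_strict_right_mono) auto
    moreover have "w r = y r + \<theta> * (x r - y r)" using r0 by (simp add: w_def mn_def mx_def)
    ultimately show ?thesis by simp
  qed
  ultimately show False by simp
qed

lemma unique_eq_load_single_mono_in_demand:
  assumes fin: "finite R" and mono: "\<And>r. r \<in> R \<Longrightarrow> mono_on {0..} (c r)"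
    and unique: "\<forall>d\<ge>0. (\<exists>x. eq_load_single R c d x) \<and>
       (\<forall>x y. eq_load_single R c d x \<longrightarrow> eq_load_single R c d y \<longrightarrow> (\<forall>r\<in>R. x r = y r))"
  obtains F where "\<forall>r\<in>R. mono_on {0..} (F r)"
    and "\<And>d x r. 0 \<le> d \<Longrightarrow> eq_load_single R c d x \<Longrightarrow> r \<in> R \<Longrightarrow> x r = F r d"
proof
  define F where "F r d = (SOME x. eq_load_single R c d x) r" for r d
  have F: "eq_load_single R c d (\<lambda>r. F r d)" if "0 \<le> d" for d
    unfolding F_def using unique that by (metis someI_ex)
  show F_eq: "x r = F r d" if "0 \<le> d" "eq_load_single R c d x" "r \<in> R" for d x r
    using unique F that by blast
  show "\<forall>r\<in>R. mono_on {0..} (F r)"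
  proof (intro ballI mono_onI)
    fix r and d1 d2 :: real assume r: "r \<in> R" and d: "d1 \<in> {0..}" "d2 \<in> {0..}" "d1 \<le> d2"
    obtain lam1 lam2 where
      "single_wardrop R c d1 (\<lambda>r. F r d1) lam1" "single_wardrop R c d2 (\<lambda>r. F r d2) lam2"
      using F d unfolding eq_load_single_iff by fastforce
    then show "F r d1 \<le> F r d2"
      using d r F_eq by (intro single_wardrop_mono_demand[OF fin mono \<open>d1 \<le> d2\<close>])
        (auto simp: eq_load_single_iff)
  qed
qed

lemma comonotonic_mono_comp:
  fixes F :: "'i \<Rightarrow> real \<Rightarrow> real"
  assumes "\<forall>i\<in>A. mono_on T (F i)" and "\<phi> ` \<Omega> \<subseteq> T"
    and "\<And>i w. i \<in> A \<Longrightarrow> w \<in> \<Omega> \<Longrightarrow> \<psi> i w = F i (\<phi> w)"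
  shows "comonotonic A \<Omega> \<psi>"
  unfolding comonotonic_def
proof (intro ballI)
  fix i j w1 w2 assume ij: "i \<in> A" "j \<in> A" and w: "w1 \<in> \<Omega>" "w2 \<in> \<Omega>"
  have T: "\<phi> w1 \<in> T" "\<phi> w2 \<in> T" using assms(2) w by auto
  have "0 \<le> (F i (\<phi> w1) - F i (\<phi> w2)) * (F j (\<phi> w1) - F j (\<phi> w2))"
  proof (cases "\<phi> w1 \<le> \<phi> w2")
    case True
    then show ?thesis
      using mono_onD[of T "F i"] mono_onD[of T "F j"] assms(1) ij T by (auto intro!: mult_nonpos_nonpos)
  next
    case False
    then show ?thesis
      using mono_onD[of T "F i"] mono_onD[of T "F j"] assms(1) ij T by auto
  qed
  then show "0 \<le> (\<psi> i w1 - \<psi> i w2) * (\<psi> j w1 - \<psi> j w2)"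
    using assms(3) ij w by simp
qed

section \<open>Cost levels\<close>

definition level_resources :: "('h \<Rightarrow> real) \<Rightarrow> 'h set \<Rightarrow> ('h \<Rightarrow> 'r set) \<Rightarrow> real \<Rightarrow> 'r set" where
  "level_resources lam Com S \<theta> = (\<Union>h\<in>{h\<in>Com. lam h = \<theta>}. S h) - (\<Union>h\<in>{h\<in>Com. \<theta> < lam h}. S h)"

lemma level_resources_subset:
  assumes "singleton_game Res c Com S"
  shows "level_resources lam Com S \<theta> \<subseteq> Res"
  unfolding level_resources_def using singleton_gameD(6)[OF assms] by blast

lemma wardrop_eq_used_in_level_resources:
  assumes game: "singleton_game Res c Com S" and f: "wardrop_eq c Com S \<mu> f"
    and lam: "\<And>h. h \<in> Com \<Longrightarrow> lam h = min_cost c Com S f h"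
    and h: "h \<in> Com" and r: "r \<in> S h" and pos: "0 < f h r"
  shows "r \<in> level_resources lam Com S \<theta> \<longleftrightarrow> lam h = \<theta>"
proof -
  have "lam h' \<le> lam h" if "h' \<in> Com" "r \<in> S h'" for h'
    using min_cost_le[OF game that, of f] wardrop_eq_min_cost[OF game f h r pos] lam that(1) h by simp
  then show ?thesis
    unfolding level_resources_def using h r by force
qed

lemma level_resources_cost_ge:
  assumes game: "singleton_game Res c Com S"
    and lam: "\<And>h. h \<in> Com \<Longrightarrow> lam h = min_cost c Com S f h"
    and r: "r \<in> level_resources lam Com S \<theta>"
  shows "\<theta> \<le> c r (load Com S f r)"
proof -
  obtain h where "h \<in> Com" "lam h = \<theta>" "r \<in> S h"
    using r unfolding level_resources_def by blast
  then show ?thesis using min_cost_le[OF game, of h r f] lam by simp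
qed

lemma sum_load_level_resources:
  assumes game: "singleton_game Res c Com S" and f: "wardrop_eq c Com S \<mu> f"
    and lam: "\<And>h. h \<in> Com \<Longrightarrow> lam h = min_cost c Com S f h"
  shows "(\<Sum>r\<in>level_resources lam Com S \<theta>. load Com S f r) = (\<Sum>h\<in>{h\<in>Com. lam h = \<theta>}. \<mu> h)"
proof -
  define R where "R = level_resources lam Com S \<theta>"
  have fin: "finite R" "finite Com"
    using level_resources_subset[OF game] singleton_gameD(1,2)[OF game] finite_subset
    unfolding R_def by blast+
  have nonneg: "\<And>r. r \<in> S h \<Longrightarrow> 0 \<le> f h r" and sum_f: "(\<Sum>r\<in>S h. f h r) = \<mu> h"
    if "h \<in> Com" for h
    using wardrop_eq_feasible[OF f] that unfolding feasible_flow_def by auto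
  have on_R: "(\<Sum>r\<in>{r\<in>R. r \<in> S h}. f h r) = (if lam h = \<theta> then \<mu> h else 0)" if h: "h \<in> Com" for h
  proof -
    have pos_iff: "r \<in> R \<longleftrightarrow> lam h = \<theta>" if "r \<in> S h" "0 < f h r" for r
      unfolding R_def using wardrop_eq_used_in_level_resources[OF game f lam h that] .
    show ?thesis
    proof (cases "lam h = \<theta>")
      case True
      have "(\<Sum>r\<in>{r\<in>R. r \<in> S h}. f h r) = (\<Sum>r\<in>S h. f h r)"
        using singleton_gameD(7)[OF game h] pos_iff nonneg[OF h] True
        by (intro sum.mono_neutral_left) (auto simp: order.order_iff_strict)
      then show ?thesis using True sum_f[OF h] by simp
    next
      case False
      then show ?thesis
        using pos_iff nonneg[OF h] by (auto simp: order.order_iff_strict intro!: sum.neutral)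
    qed
  qed
  have "(\<Sum>r\<in>R. load Com S f r) = (\<Sum>h\<in>Com. \<Sum>r\<in>{r\<in>R. r \<in> S h}. f h r)"
    unfolding load_def using fin by (intro sum.swap_restrict) auto
  also have "\<dots> = (\<Sum>h\<in>Com. if lam h = \<theta> then \<mu> h else 0)"
    using on_R by simp
  also have "\<dots> = (\<Sum>h\<in>{h\<in>Com. lam h = \<theta>}. \<mu> h)"
    using fin by (simp add: sum.inter_filter)
  finally show ?thesis unfolding R_def .
qed

lemma wardrop_eq_level_single_wardrop:
  assumes game: "singleton_game Res c Com S" and f: "wardrop_eq c Com S \<mu> f"
    and lam: "\<And>h. h \<in> Com \<Longrightarrow> lam h = min_cost c Com S f h"
  shows "single_wardrop (level_resources lam Com S \<theta>) c (\<Sum>h\<in>{h\<in>Com. lam h = \<theta>}. \<mu> h)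
           (load Com S f) \<theta>"
  unfolding single_wardrop_def
proof (intro conjI ballI impI sum_load_level_resources[OF game f lam])
  fix r assume r: "r \<in> level_resources lam Com S \<theta>"
  show "0 \<le> load Com S f r" using load_nonneg[OF wardrop_eq_feasible[OF f]] .
  show "\<theta> \<le> c r (load Com S f r)" using level_resources_cost_ge[OF game lam r] .
  assume "0 < load Com S f r"
  then obtain h where h: "h \<in> Com" "r \<in> S h" "0 < f h r"
    unfolding load_def by (metis (no_types, lifting) mem_Collect_eq not_less sum_nonpos)
  then show "c r (load Com S f r) = \<theta>"
    using wardrop_eq_used_in_level_resources[OF game f lam h] wardrop_eq_min_cost[OF game f h] lam r
    by simp
qed

lemma cost_class_level:
  assumes rep: "\<forall>h\<in>Com. \<forall>h'\<in>Com. lam h \<le> lam h' \<longleftrightarrow> le h h'"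
    and h0: "h0 \<in> Com" and C: "C = {h\<in>Com. le h h0 \<and> le h0 h}"
  shows "C = {h\<in>Com. lam h = lam h0}"
    and "res_C Com S le C = level_resources lam Com S (lam h0)"
proof -
  have le_iff: "le h h' \<longleftrightarrow> lam h \<le> lam h'" if "h \<in> Com" "h' \<in> Com" for h h'
    using rep that by blast
  show C_level: "C = {h\<in>Com. lam h = lam h0}"
    unfolding C using h0 by (auto simp: le_iff)
  have "above_class Com le C = {h\<in>Com. lam h0 < lam h}"
    unfolding above_class_def C_level using h0 by (fastforce simp: le_iff)
  then show "res_C Com S le C = level_resources lam Com S (lam h0)"
    unfolding res_C_def level_resources_def C_level by simp
qed

lemma eq_load_single_res_C:
  assumes game: "singleton_game Res c Com S" and cls: "cost_class Com le C"
    and \<mu>: "\<mu> \<in> Gamma_region c Com S le" and x: "eq_load Res c Com S \<mu> x"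
  shows "eq_load_single (res_C Com S le C) c (\<Sum>h\<in>C. \<mu> h) x"
proof -
  obtain f where f: "wardrop_eq c Com S \<mu> f" and x_f: "\<forall>r\<in>Res. x r = load Com S f r"
    using x unfolding eq_load_def by blast
  obtain h0 where h0: "h0 \<in> Com" and C: "C = {h\<in>Com. le h h0 \<and> le h0 h}"
    using cls unfolding cost_class_def by blast
  let ?lam = "eq_cost c Com S \<mu>"
  have rep: "\<forall>h\<in>Com. \<forall>h'\<in>Com. ?lam h \<le> ?lam h' \<longleftrightarrow> le h h'"
    using \<mu> unfolding Gamma_region_def by blast
  note level = cost_class_level[OF rep h0 C]
  have "single_wardrop (level_resources ?lam Com S (?lam h0)) c (\<Sum>h\<in>{h\<in>Com. ?lam h = ?lam h0}. \<mu> h)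
      (load Com S f) (?lam h0)"
    by (rule wardrop_eq_level_single_wardrop[OF game f]) (rule eq_cost_eq_min_cost[OF game f])
  then have "single_wardrop (res_C Com S le C) c (\<Sum>h\<in>C. \<mu> h) (load Com S f) (?lam h0)"
    unfolding level(2) by (simp only: level(1))
  moreover have "\<forall>r\<in>res_C Com S le C. x r = load Com S f r"
    using x_f level_resources_subset[OF game] unfolding level(2) by blast
  ultimately show ?thesis
    unfolding eq_load_single_iff using single_wardrop_cong by blast
qed

lemma cost_class_subset: "cost_class Com le C \<Longrightarrow> C \<subseteq> Com"
  unfolding cost_class_def by blast

lemma unique_eq_load_res_C_mono_in_demand:
  assumes game: "singleton_game Res c Com S" and cls: "cost_class Com le C"
    and unique: "\<forall>d\<ge>0. (\<exists>x. eq_load_single (res_C Com S le C) c d x) \<and>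
       (\<forall>x y. eq_load_single (res_C Com S le C) c d x \<longrightarrow> eq_load_single (res_C Com S le C) c d y \<longrightarrow>
          (\<forall>r\<in>res_C Com S le C. x r = y r))"
  obtains F where "\<forall>r\<in>res_C Com S le C. mono_on {0..} (F r)"
    and "\<And>\<mu> x r. \<mu> \<in> Gamma_region c Com S le \<Longrightarrow> eq_load Res c Com S \<mu> x \<Longrightarrow> r \<in> res_C Com S le C \<Longrightarrow>
           x r = F r (\<Sum>h\<in>C. \<mu> h)"
proof -
  have "res_C Com S le C \<subseteq> Res"
    using cost_class_subset[OF cls] singleton_gameD(6)[OF game] unfolding res_C_def by blast
  then have fin: "finite (res_C Com S le C)"
    and mono: "\<And>r. r \<in> res_C Com S le C \<Longrightarrow> mono_on {0..} (c r)"
    using singleton_gameD(1,4)[OF game] finite_subset by blast+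
  obtain F where F_mono: "\<forall>r\<in>res_C Com S le C. mono_on {0..} (F r)"
    and F: "\<And>d x r. 0 \<le> d \<Longrightarrow> eq_load_single (res_C Com S le C) c d x \<Longrightarrow> r \<in> res_C Com S le C \<Longrightarrow>
              x r = F r d"
    using unique_eq_load_single_mono_in_demand[where c = c, OF fin mono unique] by blast
  have "0 \<le> (\<Sum>h\<in>C. \<mu> h)" if "\<mu> \<in> Gamma_region c Com S le" for \<mu>
    using that cost_class_subset[OF cls] unfolding Gamma_region_def by (auto intro!: sum_nonneg)
  then show thesis
    using that[OF F_mono] F eq_load_single_res_C[OF game cls] by blast
qed

theorem theorem4p1:
  fixes Res :: "'r set" and c :: "'r \<Rightarrow> real \<Rightarrow> real"
    and Com :: "'h set" and S :: "'h \<Rightarrow> 'r set"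
    and le :: "'h \<Rightarrow> 'h \<Rightarrow> bool" and C :: "'h set"
  assumes game: "singleton_game Res c Com S"
    and wo: "weak_order_on Com le"
    and cls: "cost_class Com le C"
  shows
    "(\<forall>\<mu>\<in>Gamma_region c Com S le. \<forall>x. eq_load Res c Com S \<mu> x \<longrightarrow>
        eq_load_single (res_C Com S le C) c (\<Sum>h\<in>C. \<mu> h) x)
     \<and>
     ((\<forall>d\<ge>0. (\<exists>x. eq_load_single (res_C Com S le C) c d x) \<and>
         (\<forall>x y. eq_load_single (res_C Com S le C) c d x \<longrightarrow>
                eq_load_single (res_C Com S le C) c d y \<longrightarrow>
                (\<forall>r\<in>res_C Com S le C. x r = y r)))
      \<longrightarrow>
        (\<forall>\<mu>\<in>Gamma_region c Com S le. \<forall>x y. eq_load Res c Com S \<mu> x \<longrightarrow> eq_load Res c Com S \<mu> y \<longrightarrow>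
            (\<forall>r\<in>res_C Com S le C. x r = y r))
      \<and> (\<exists>F :: 'r \<Rightarrow> real \<Rightarrow> real.
            (\<forall>r\<in>res_C Com S le C. mono_on {0..} (F r)) \<and>
            (\<forall>\<mu>\<in>Gamma_region c Com S le. \<forall>x. eq_load Res c Com S \<mu> x \<longrightarrow>
               (\<forall>r\<in>res_C Com S le C. x r = F r (\<Sum>h\<in>C. \<mu> h))))
      \<and> comonotonic (res_C Com S le C) (Gamma_region c Com S le) (\<lambda>r \<mu>. eq_load_val Res c Com S \<mu> r))"
proof (intro conjI impI)
  show "\<forall>\<mu>\<in>Gamma_region c Com S le. \<forall>x. eq_load Res c Com S \<mu> x \<longrightarrow>
      eq_load_single (res_C Com S le C) c (\<Sum>h\<in>C. \<mu> h) x"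
    using eq_load_single_res_C[OF game cls] by blast
  assume "\<forall>d\<ge>0. (\<exists>x. eq_load_single (res_C Com S le C) c d x) \<and>
    (\<forall>x y. eq_load_single (res_C Com S le C) c d x \<longrightarrow> eq_load_single (res_C Com S le C) c d y \<longrightarrow>
       (\<forall>r\<in>res_C Com S le C. x r = y r))"
  then obtain F where F_mono: "\<forall>r\<in>res_C Com S le C. mono_on {0..} (F r)"
    and F: "\<And>\<mu> x r. \<mu> \<in> Gamma_region c Com S le \<Longrightarrow> eq_load Res c Com S \<mu> x \<Longrightarrow>
              r \<in> res_C Com S le C \<Longrightarrow> x r = F r (\<Sum>h\<in>C. \<mu> h)"
    using unique_eq_load_res_C_mono_in_demand[OF game cls] by blast
  show "\<forall>\<mu>\<in>Gamma_region c Com S le. \<forall>x y. eq_load Res c Com S \<mu> x \<longrightarrow> eq_load Res c Com S \<mu> y \<longrightarrow>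
      (\<forall>r\<in>res_C Com S le C. x r = y r)"
    using F by metis
  show "\<exists>F. (\<forall>r\<in>res_C Com S le C. mono_on {0..} (F r)) \<and> (\<forall>\<mu>\<in>Gamma_region c Com S le.
      \<forall>x. eq_load Res c Com S \<mu> x \<longrightarrow> (\<forall>r\<in>res_C Com S le C. x r = F r (\<Sum>h\<in>C. \<mu> h)))"
    using F_mono F by blast
  show "comonotonic (res_C Com S le C) (Gamma_region c Com S le) (\<lambda>r \<mu>. eq_load_val Res c Com S \<mu> r)"
    using F cost_class_subset[OF cls] unfolding Gamma_region_def
    by (intro comonotonic_mono_comp[OF F_mono, of "\<lambda>\<mu>. \<Sum>h\<in>C. \<mu> h"])
      (auto intro!: sum_nonneg eq_load_val_eq[OF game])
qed

end
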